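(* Let $(\mathcal{X},\mathcal{E})$ be a measurable space with a positive measure $\mu$, let $\mathcal{K}:\mathcal{X}\times\mathcal{X}\to\mathbb{R}$ be a function, and let $\mathcal{A}$ be a procedure such that for every $k\ge1$ and every $\mathbf{Y}_k=(Y_1,\dots,Y_k)\in\mathcal{X}^k$, $\mathcal{A}(\mathbf{Y}_k)(x)=\frac1k\sum_{i=1}^k\mathcal{K}(x,Y_i)$ for all $x\in\mathcal{X}$, and $\mathcal{A}(\mathbf{Y}_k)$ is a probability density with respect to $\mu$. Let $V\ge2$ and $n=pV$ with $p\ge1$ an integer, let $\mathbf{X}=(X_1,\dots,X_n)\in\mathcal{X}^n$ and partition $\mathbf{X}$ into $V$ disjoint subsamples $\mathbf{X}_1,\dots,\mathbf{X}_V$, each of size $p$, with $\mathbf{X}_j^c=\mathbf{X}\setminus\mathbf{X}_j$. Set $\widehat{s}=\mathcal{A}(\mathbf{X})$ and $\widehat{s}_j=\mathcal{A}(\mathbf{X}_j^c)$. Then for every probability $P_s$ on $\mathcal{X}$, \[ h^2(s,\widehat{s})\le\frac1V\sum_{j=1}^V h^2(s,\widehat{s}_j). \]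
   Context: For probabilities $P,Q$ on $\mathcal{X}$, the Hellinger distance is $h(P,Q)=\left[\frac12\int(\sqrt{dP}-\sqrt{dQ})^2\right]^{1/2}$, where $dP,dQ$ are densities with respect to any dominating measure; for a density $t$ with respect to $\mu$ one writes $h(s,t)$ for $h(P_s,t\cdot\mu)$. A procedure is a measurable mapping from $\bigcup_{k\ge1}\mathcal{X}^k$ to the set of probability densities with respect to $\mu$. *)

theory Defs
  imports "HOL-Probability.Probability"
begin

definition sum_meas :: "'a measure \<Rightarrow> 'a measure \<Rightarrow> 'a measure" where
  "sum_meas P Q = measure_of (space P) (sets P) (\<lambda>A. emeasure P A + emeasure Q A)"

definition hellinger_sq :: "'a measure \<Rightarrow> 'a measure \<Rightarrow> real" where
  "hellinger_sq P Q =
    (let \<nu> = sum_meas P Q in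
     enn2real ((1/2) * (\<integral>\<^sup>+ x. ennreal ((sqrt (enn2real (RN_deriv \<nu> P x))
                                   - sqrt (enn2real (RN_deriv \<nu> Q x)))\<^sup>2) \<partial>\<nu>)))"

definition prob_density :: "'a measure \<Rightarrow> ('a \<Rightarrow> real) \<Rightarrow> bool" where
  "prob_density \<mu> t \<longleftrightarrow> t \<in> borel_measurable \<mu> \<and> (\<forall>x\<in>space \<mu>. 0 \<le> t x)
      \<and> (\<integral>\<^sup>+ x. ennreal (t x) \<partial>\<mu>) = 1"

end

theory Submission
  imports Defs
begin

text \<open>Each sample point is left out by exactly one block, so the estimator built from
  the whole sample is the average of the V leave-block-out estimators. With densities
  p, q against a common dominating measure, h^2 = 1/2 \<integral> (sqrt p - sqrt q)^2, and
  t \<mapsto> (sqrt a - sqrt t)^2 = a + t - 2 sqrt a sqrt t is convex because sqrt is concave;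
  integrating this pointwise Jensen inequality shows that h^2(P, -) is convex along
  mixtures. All densities are taken against P + s\<cdot>\<mu>, where s is the mixture density,
  which dominates P and every mixture component.\<close>

lemma sets_sum_meas [simp]: "sets (sum_meas P Q) = sets P"
  unfolding sum_meas_def by (simp add: sets.sigma_sets_eq)

lemma space_sum_meas [simp]: "space (sum_meas P Q) = space P"
  unfolding sum_meas_def by (simp add: sets.space_closed)

lemma emeasure_sum_meas:
  assumes "sets Q = sets P" "X \<in> sets P"
  shows "emeasure (sum_meas P Q) X = emeasure P X + emeasure Q X"
  unfolding sum_meas_def
proof (rule emeasure_measure_of_sigma)
  show "sigma_algebra (space P) (sets P)" by (rule sets.sigma_algebra_axioms)
  show "positive (sets P) (\<lambda>X. emeasure P X + emeasure Q X)"
    by (simp add: positive_def)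
  show "countably_additive (sets P) (\<lambda>X. emeasure P X + emeasure Q X)"
    unfolding countably_additive_def
  proof (intro allI impI)
    fix F :: "nat \<Rightarrow> _" assume F: "range F \<subseteq> sets P" "disjoint_family F"
    then have "range F \<subseteq> sets Q" using assms by simp
    then show "(\<Sum>i. emeasure P (F i) + emeasure Q (F i))
        = emeasure P (\<Union> (range F)) + emeasure Q (\<Union> (range F))"
      using suminf_emeasure[OF F] suminf_emeasure[OF _ F(2)]
      by (simp add: suminf_add[symmetric])
  qed
qed (use assms in auto)

lemma finite_measure_sum_meas:
  assumes "finite_measure P" "finite_measure Q" "sets Q = sets P"
  shows "finite_measure (sum_meas P Q)"
proof (rule finite_measureI)
  have "space Q = space P" using assms(3) by (rule sets_eq_imp_space_eq)
  then show "emeasure (sum_meas P Q) (space (sum_meas P Q)) \<noteq> \<infinity>"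
    using assms finite_measure.emeasure_finite[of P "space P"]
      finite_measure.emeasure_finite[of Q "space Q"]
    by (simp add: emeasure_sum_meas)
qed

lemma absolutely_continuous_sum_meas:
  assumes "sets Q = sets P"
  shows "absolutely_continuous (sum_meas P Q) P" and "absolutely_continuous (sum_meas P Q) Q"
  using assms by (auto simp: absolutely_continuous_def null_sets_def emeasure_sum_meas)

lemma sum_meas_density:
  fixes p q :: "'a \<Rightarrow> real"
  assumes "p \<in> borel_measurable L" "q \<in> borel_measurable L"
    and "\<And>x. x \<in> space L \<Longrightarrow> 0 \<le> p x" "\<And>x. x \<in> space L \<Longrightarrow> 0 \<le> q x"
  shows "sum_meas (density L p) (density L q) = density L (\<lambda>x. p x + q x)"
proof (rule measure_eqI)
  fix X assume "X \<in> sets (sum_meas (density L p) (density L q))"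
  then have X: "X \<in> sets L" by simp
  have "emeasure (sum_meas (density L p) (density L q)) X
      = (\<integral>\<^sup>+ x. ennreal (p x) * indicator X x \<partial>L) + (\<integral>\<^sup>+ x. ennreal (q x) * indicator X x \<partial>L)"
    using X assms by (simp add: emeasure_sum_meas emeasure_density)
  also have "\<dots> = (\<integral>\<^sup>+ x. ennreal (p x + q x) * indicator X x \<partial>L)"
    using X assms
    by (subst nn_integral_add[symmetric]) (auto intro!: nn_integral_cong simp: distrib_right)
  also have "\<dots> = emeasure (density L (\<lambda>x. p x + q x)) X"
    using X assms by (simp add: emeasure_density)
  finally show "emeasure (sum_meas (density L p) (density L q)) X
      = emeasure (density L (\<lambda>x. p x + q x)) X" .
qed simp

lemma density_enn2real_RN_deriv:
  assumes "sigma_finite_measure L" "finite_measure N"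
    and "absolutely_continuous L N" "sets N = sets L"
  shows "density L (\<lambda>x. enn2real (RN_deriv L N x)) = N"
proof -
  interpret L: sigma_finite_measure L by fact
  have "AE x in L. RN_deriv L N x \<noteq> \<infinity>"
    using L.RN_deriv_finite[OF finite_measure.sigma_finite_measure] assms by blast
  then have "density L (\<lambda>x. enn2real (RN_deriv L N x)) = density L (RN_deriv L N)"
    by (intro density_cong) (auto simp: less_top elim!: AE_mp)
  also have "\<dots> = N"
    using assms by (intro L.density_RN_deriv)
  finally show ?thesis .
qed

lemma finite_measures_common_density:
  assumes "finite_measure P" "finite_measure Q" "sets Q = sets P"
  obtains L :: "'a measure" and p q :: "'a \<Rightarrow> real"
  where "sets L = sets P" "p \<in> borel_measurable L" "\<And>x. 0 \<le> p x"
    "q \<in> borel_measurable L" "\<And>x. 0 \<le> q x" "P = density L p" "Q = density L q"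
proof -
  define L where "L = sum_meas P Q"
  have "sigma_finite_measure L"
    unfolding L_def using assms
    by (intro finite_measure.sigma_finite_measure finite_measure_sum_meas)
  then have "P = density L (\<lambda>x. enn2real (RN_deriv L P x))"
    and "Q = density L (\<lambda>x. enn2real (RN_deriv L Q x))"
    unfolding L_def using assms absolutely_continuous_sum_meas
    by (auto intro!: density_enn2real_RN_deriv[symmetric])
  then show thesis
    by (intro that[of L]) (auto simp: L_def)
qed

lemma density_eq_density_ratio:
  fixes s m f :: "'a \<Rightarrow> real"
  assumes sets: "sets N = sets M" and eq: "density M s = density N m"
    and s: "s \<in> borel_measurable M" "\<And>x. x \<in> space M \<Longrightarrow> 0 \<le> s x"
    and m: "m \<in> borel_measurable N" "\<And>x. x \<in> space N \<Longrightarrow> 0 \<le> m x"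
    and f: "f \<in> borel_measurable M" "\<And>x. x \<in> space M \<Longrightarrow> 0 \<le> f x"
    and f_zero: "\<And>x. x \<in> space M \<Longrightarrow> s x = 0 \<Longrightarrow> f x = 0"
  shows "density M f = density N (\<lambda>x. m x * (f x / s x))"
proof -
  have space: "space N = space M" using sets by (rule sets_eq_imp_space_eq)
  have r: "(\<lambda>x. f x / s x) \<in> borel_measurable M" using f s by measurable
  then have rN: "(\<lambda>x. f x / s x) \<in> borel_measurable N" using sets by simp
  have r_nonneg: "0 \<le> f x / s x" if "x \<in> space M" for x using that f s by simp
  have "density M f = density M (\<lambda>x. ennreal (s x) * ennreal (f x / s x))"
    using f s r_nonneg f_zero
    by (intro density_cong) (auto intro!: AE_I2 simp flip: ennreal_mult'')
  also have "\<dots> = density (density M s) (\<lambda>x. ennreal (f x / s x))"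
    using s r by (intro density_density_eq[symmetric]) auto
  also have "\<dots> = density N (\<lambda>x. ennreal (m x) * ennreal (f x / s x))"
    unfolding eq using m rN by (intro density_density_eq) auto
  also have "\<dots> = density N (\<lambda>x. m x * (f x / s x))"
  proof (rule density_cong)
    show "AE x in N. ennreal (m x) * ennreal (f x / s x) = ennreal (m x * (f x / s x))"
      using m(2) space by (intro AE_I2 ennreal_mult'[symmetric]) auto
  qed (use m(1) rN in measurable)
  finally show ?thesis .
qed

lemma prob_density_iff_prob_space:
  fixes f :: "'a \<Rightarrow> real"
  assumes "f \<in> borel_measurable L" "\<And>x. x \<in> space L \<Longrightarrow> 0 \<le> f x"
  shows "prob_density L f \<longleftrightarrow> prob_space (density L f)"
proof -
  have "emeasure (density L f) (space (density L f)) = (\<integral>\<^sup>+ x. f x \<partial>L)"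
    using assms(1) by (auto simp: emeasure_density intro!: nn_integral_cong)
  then show ?thesis
    using assms unfolding prob_density_def
    by (auto intro: prob_spaceI dest: prob_space.emeasure_space_1)
qed

lemma prob_density_imp_prob_space:
  assumes "prob_density L f"
  shows "prob_space (density L f)"
  using prob_density_iff_prob_space[of f L] assms by (simp add: prob_density_def)

lemma prob_density_density_eq:
  fixes f g :: "'a \<Rightarrow> real"
  assumes "prob_density M f" "density M f = density N g"
    and "g \<in> borel_measurable N" "\<And>x. x \<in> space N \<Longrightarrow> 0 \<le> g x"
  shows "prob_density N g"
  using assms prob_density_imp_prob_space[OF assms(1)] by (simp add: prob_density_iff_prob_space)

lemma prob_density_integral:
  fixes f :: "'a \<Rightarrow> real"
  assumes "prob_density L f"
  shows "integrable L f" and "integral\<^sup>L L f = 1"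
proof -
  show int: "integrable L f"
    using assms unfolding prob_density_def by (intro integrableI_nonneg) auto
  have "ennreal (integral\<^sup>L L f) = 1"
    using assms nn_integral_eq_integral[OF int] unfolding prob_density_def by auto
  then show "integral\<^sup>L L f = 1" by simp
qed

lemma prob_density_mean:
  fixes q :: "'i \<Rightarrow> 'a \<Rightarrow> real"
  assumes "finite J" "J \<noteq> {}" "\<And>j. j \<in> J \<Longrightarrow> prob_density L (q j)"
  shows "prob_density L (\<lambda>x. (\<Sum>j\<in>J. q j x) / card J)"
proof -
  have int: "integrable L (q j)" and one: "integral\<^sup>L L (q j) = 1" if "j \<in> J" for j
    using prob_density_integral assms(3)[OF that] by auto
  have nonneg: "0 \<le> (\<Sum>j\<in>J. q j x) / card J" if "x \<in> space L" for x
    using assms(3) that by (auto simp: prob_density_def intro!: sum_nonneg divide_nonneg_nonneg)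
  have meas: "(\<lambda>x. (\<Sum>j\<in>J. q j x) / card J) \<in> borel_measurable L"
    by (intro borel_measurable_divide borel_measurable_sum)
      (use assms(3) in \<open>auto simp: prob_density_def\<close>)
  have "(\<integral>\<^sup>+ x. ennreal ((\<Sum>j\<in>J. q j x) / card J) \<partial>L) = ennreal (\<integral>x. (\<Sum>j\<in>J. q j x) / card J \<partial>L)"
    using int nonneg by (intro nn_integral_eq_integral) auto
  also have "(\<integral>x. (\<Sum>j\<in>J. q j x) / card J \<partial>L) = 1"
    using int one assms(1,2) by (simp add: integral_sum)
  finally show ?thesis
    using meas nonneg unfolding prob_density_def by auto
qed

lemma sqrt_diff_sq_ratio:
  fixes a b :: real
  assumes "0 \<le> a" "0 \<le> b"
  shows "(a + b) * (sqrt (a / (a + b)) - sqrt (b / (a + b)))\<^sup>2 = (sqrt a - sqrt b)\<^sup>2"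
proof (cases "a + b = 0")
  case False
  then have "0 < a + b" using assms by linarith
  then show ?thesis
    by (simp add: real_sqrt_divide diff_divide_distrib[symmetric] power_divide)
qed (use assms in auto)

lemma hellinger_sq_density:
  fixes p q :: "'a \<Rightarrow> real"
  assumes p: "p \<in> borel_measurable L" "\<And>x. x \<in> space L \<Longrightarrow> 0 \<le> p x"
    and q: "q \<in> borel_measurable L" "\<And>x. x \<in> space L \<Longrightarrow> 0 \<le> q x"
    and finite: "finite_measure (density L p)" "finite_measure (density L q)"
  shows "hellinger_sq (density L p) (density L q)
    = enn2real ((1/2) * (\<integral>\<^sup>+ x. ennreal ((sqrt (p x) - sqrt (q x))\<^sup>2) \<partial>L))"
proof -
  \<comment> \<open>The measure P + Q of the definition is (p + q)\<cdot>L, against which the densities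
    of P and Q are p / (p + q) and q / (p + q).\<close>
  define \<nu> where "\<nu> = density L (\<lambda>x. p x + q x)"
  have \<nu>: "sum_meas (density L p) (density L q) = \<nu>"
    unfolding \<nu>_def by (rule sum_meas_density) (use p q in auto)
  have RN: "AE x in \<nu>. ennreal (f x / (p x + q x)) = RN_deriv \<nu> (density L f) x"
    if "f \<in> {p, q}" for f
  proof -
    have "density L (\<lambda>x. p x + q x) = density \<nu> (\<lambda>_. ennreal 1)"
      by (simp add: \<nu>_def density_1)
    from density_eq_density_ratio[OF _ this, of f] that p q
    have "density L f = density \<nu> (\<lambda>x. f x / (p x + q x))"
      by (auto simp: \<nu>_def add_nonneg_eq_0_iff)
    then show ?thesis
      using that p q finite
      by (intro RN_deriv_unique_sigma_finite finite_measure.sigma_finite_measure) (auto simp: \<nu>_def)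
  qed
  have "(\<integral>\<^sup>+ x. ennreal ((sqrt (enn2real (RN_deriv \<nu> (density L p) x))
                          - sqrt (enn2real (RN_deriv \<nu> (density L q) x)))\<^sup>2) \<partial>\<nu>)
      = (\<integral>\<^sup>+ x. ennreal ((sqrt (p x / (p x + q x)) - sqrt (q x / (p x + q x)))\<^sup>2) \<partial>\<nu>)"
  proof (rule nn_integral_cong_AE)
    show "AE x in \<nu>. ennreal ((sqrt (enn2real (RN_deriv \<nu> (density L p) x))
                                   - sqrt (enn2real (RN_deriv \<nu> (density L q) x)))\<^sup>2)
        = ennreal ((sqrt (p x / (p x + q x)) - sqrt (q x / (p x + q x)))\<^sup>2)"
      using RN[of p, OF insertI1] RN[of q, OF insertI2[OF singletonI]] AE_space
    proof eventually_elim
      case (elim x)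
      then have "0 \<le> p x / (p x + q x)" "0 \<le> q x / (p x + q x)" by (auto simp: \<nu>_def p q)
      with elim show ?case by (metis enn2real_ennreal)
    qed
  qed
  also have "\<dots> = (\<integral>\<^sup>+ x. ennreal (p x + q x)
                       * ennreal ((sqrt (p x / (p x + q x)) - sqrt (q x / (p x + q x)))\<^sup>2) \<partial>L)"
    unfolding \<nu>_def using p q by (intro nn_integral_density) auto
  also have "\<dots> = (\<integral>\<^sup>+ x. ennreal ((sqrt (p x) - sqrt (q x))\<^sup>2) \<partial>L)"
    using p q by (intro nn_integral_cong)
      (simp add: sqrt_diff_sq_ratio flip: ennreal_mult ennreal_plus del: ennreal_plus)
  finally show ?thesis
    unfolding hellinger_sq_def Let_def \<nu> by simp
qed

lemma sqrt_diff_sq_le_sum: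
  fixes a b :: real
  assumes "0 \<le> a" "0 \<le> b"
  shows "(sqrt a - sqrt b)\<^sup>2 \<le> a + b"
  using assms by (simp add: power2_diff)

lemma integrable_hellinger_integrand:
  assumes "prob_density L p" "prob_density L q"
  shows "integrable L (\<lambda>x. (sqrt (p x) - sqrt (q x))\<^sup>2)"
proof (rule Bochner_Integration.integrable_bound[where f="\<lambda>x. p x + q x"])
  show "integrable L (\<lambda>x. p x + q x)"
    using assms by (simp add: prob_density_integral)
  have [measurable]: "p \<in> borel_measurable L" "q \<in> borel_measurable L"
    using assms unfolding prob_density_def by auto
  show "(\<lambda>x. (sqrt (p x) - sqrt (q x))\<^sup>2) \<in> borel_measurable L"
    by measurable
  show "AE x in L. norm ((sqrt (p x) - sqrt (q x))\<^sup>2) \<le> norm (p x + q x)"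
    using assms by (intro AE_I2) (simp add: prob_density_def sqrt_diff_sq_le_sum)
qed

lemma hellinger_sq_density_integral:
  assumes "prob_density L p" "prob_density L q"
  shows "hellinger_sq (density L p) (density L q) = (\<integral>x. (sqrt (p x) - sqrt (q x))\<^sup>2 \<partial>L) / 2"
proof -
  have "finite_measure (density L p)" "finite_measure (density L q)"
    using assms prob_density_imp_prob_space by (auto simp: prob_space_def)
  then have "hellinger_sq (density L p) (density L q)
      = enn2real ((1/2) * (\<integral>\<^sup>+ x. ennreal ((sqrt (p x) - sqrt (q x))\<^sup>2) \<partial>L))"
    using assms unfolding prob_density_def by (intro hellinger_sq_density) auto
  also have "(\<integral>\<^sup>+ x. ennreal ((sqrt (p x) - sqrt (q x))\<^sup>2) \<partial>L)
      = ennreal (\<integral>x. (sqrt (p x) - sqrt (q x))\<^sup>2 \<partial>L)"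
    using integrable_hellinger_integrand[OF assms] by (intro nn_integral_eq_integral) auto
  also have "(1/2 :: ennreal) = ennreal (1/2)"
    by (metis divide_ennreal ennreal_1 ennreal_numeral zero_less_numeral zero_le_one)
  finally show ?thesis
    by (simp add: integral_nonneg_AE flip: ennreal_mult' del: ennreal_half)
qed

lemma sqrt_diff_sq_mean_le:
  fixes a :: real and b :: "'i \<Rightarrow> real"
  assumes J: "finite J" "J \<noteq> {}" and a: "0 \<le> a" and b: "\<And>j. j \<in> J \<Longrightarrow> 0 \<le> b j"
  shows "(sqrt a - sqrt ((\<Sum>j\<in>J. b j) / card J))\<^sup>2 \<le> (\<Sum>j\<in>J. (sqrt a - sqrt (b j))\<^sup>2) / card J"
proof -
  define c where "c = real (card J)"
  define m where "m = (\<Sum>j\<in>J. b j) / c"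
  have c: "0 < c" using J by (simp add: c_def card_gt_0_iff)
  have m: "0 \<le> m" using b c by (simp add: m_def sum_nonneg)
  have "(\<Sum>j\<in>J. sqrt (b j))\<^sup>2 \<le> c * (\<Sum>j\<in>J. b j)"
    using Cauchy_Schwarz_ineq_sum[of "\<lambda>_. 1" "\<lambda>j. sqrt (b j)" J] b by (simp add: c_def)
  then have "((\<Sum>j\<in>J. sqrt (b j)) / c)\<^sup>2 \<le> m"
    using c by (simp add: m_def power_divide power2_eq_square divide_le_eq field_simps)
  then have mean_sqrt: "(\<Sum>j\<in>J. sqrt (b j)) / c \<le> sqrt m"
    by (rule real_le_rsqrt)
  have "(sqrt a - sqrt m)\<^sup>2 = a + m - 2 * sqrt a * sqrt m"
    using a m by (simp add: power2_diff)
  also have "\<dots> \<le> a + m - 2 * sqrt a * ((\<Sum>j\<in>J. sqrt (b j)) / c)"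
    using mult_left_mono[OF mean_sqrt, of "2 * sqrt a"] a by simp
  also have "\<dots> = (\<Sum>j\<in>J. a + b j - 2 * sqrt a * sqrt (b j)) / c"
    using c by (simp add: m_def sum.distrib sum_subtractf sum_distrib_left c_def field_simps)
  also have "\<dots> = (\<Sum>j\<in>J. (sqrt a - sqrt (b j))\<^sup>2) / c"
    using a b by (simp add: power2_diff)
  finally show ?thesis by (simp add: m_def c_def)
qed

lemma hellinger_sq_density_mean_le:
  fixes p :: "'a \<Rightarrow> real" and q :: "'i \<Rightarrow> 'a \<Rightarrow> real"
  assumes J: "finite J" "J \<noteq> {}"
    and p: "prob_density L p" and q: "\<And>j. j \<in> J \<Longrightarrow> prob_density L (q j)"
  shows "hellinger_sq (density L p) (density L (\<lambda>x. (\<Sum>j\<in>J. q j x) / card J))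
    \<le> (\<Sum>j\<in>J. hellinger_sq (density L p) (density L (q j))) / card J"
proof -
  define F where "F j x = (sqrt (p x) - sqrt (q j x))\<^sup>2" for j x
  have int: "integrable L (F j)" if "j \<in> J" for j
    unfolding F_def using p q[OF that] by (rule integrable_hellinger_integrand)
  have "(\<integral>x. (sqrt (p x) - sqrt ((\<Sum>j\<in>J. q j x) / card J))\<^sup>2 \<partial>L) \<le> (\<integral>x. (\<Sum>j\<in>J. F j x) / card J \<partial>L)"
  proof (rule integral_mono)
    show "integrable L (\<lambda>x. (sqrt (p x) - sqrt ((\<Sum>j\<in>J. q j x) / card J))\<^sup>2)"
      using p prob_density_mean[OF J q] by (rule integrable_hellinger_integrand)
    show "integrable L (\<lambda>x. (\<Sum>j\<in>J. F j x) / card J)"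
      using int by auto
    show "(sqrt (p x) - sqrt ((\<Sum>j\<in>J. q j x) / card J))\<^sup>2 \<le> (\<Sum>j\<in>J. F j x) / card J"
      if "x \<in> space L" for x
      unfolding F_def using J p q that by (intro sqrt_diff_sq_mean_le) (auto simp: prob_density_def)
  qed
  also have "\<dots> = (\<Sum>j\<in>J. \<integral>x. F j x \<partial>L) / card J"
    using int by (simp add: integral_sum)
  finally show ?thesis
    using p q prob_density_mean[OF J q]
    by (simp add: hellinger_sq_density_integral F_def divide_right_mono
        flip: sum_divide_distrib)
qed

lemma hellinger_sq_mixture_le:
  fixes q :: "'i \<Rightarrow> 'a \<Rightarrow> real"
  assumes P: "prob_space P" "sets P = sets \<mu>"
    and J: "finite J" "J \<noteq> {}" and q: "\<And>j. j \<in> J \<Longrightarrow> prob_density \<mu> (q j)"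
  shows "hellinger_sq P (density \<mu> (\<lambda>x. (\<Sum>j\<in>J. q j x) / card J))
    \<le> (\<Sum>j\<in>J. hellinger_sq P (density \<mu> (q j))) / card J"
proof -
  define s where "s x = (\<Sum>j\<in>J. q j x) / card J" for x
  have s: "prob_density \<mu> s"
    unfolding s_def using J q by (rule prob_density_mean)
  have s_zero: "q j x = 0" if "j \<in> J" "x \<in> space \<mu>" "s x = 0" for j x
    using that J q by (auto simp: s_def prob_density_def sum_nonneg_eq_0_iff)
  have "finite_measure P" "finite_measure (density \<mu> s)" "sets (density \<mu> s) = sets P"
    using prob_density_imp_prob_space[OF s] P by (auto simp: prob_space_def)
  then obtain L and p m :: "'a \<Rightarrow> real"
    where L: "sets L = sets P" and p: "p \<in> borel_measurable L" "\<And>x. 0 \<le> p x"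
    and m: "m \<in> borel_measurable L" "\<And>x. 0 \<le> m x"
    and P_eq: "P = density L p" and s_eq: "density \<mu> s = density L m"
    by (rule finite_measures_common_density) blast
  have sets_L: "sets L = sets \<mu>" using L P(2) by simp
  then have space_L: "space L = space \<mu>" by (rule sets_eq_imp_space_eq)
  define b where "b j x = m x * (q j x / s x)" for j x
  have ratio: "density \<mu> f = density L (\<lambda>x. m x * (f x / s x))"
    if "prob_density \<mu> f" "\<And>x. x \<in> space \<mu> \<Longrightarrow> s x = 0 \<Longrightarrow> f x = 0" for f
    by (rule density_eq_density_ratio[OF _ s_eq])
      (use L P(2) s m that in \<open>auto simp: prob_density_def\<close>)
  have q_eq: "density \<mu> (q j) = density L (b j)" if "j \<in> J" for j
    using ratio[OF q[OF that] s_zero[OF that]] by (simp add: b_def)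
  have "(\<Sum>j\<in>J. b j x) / card J = m x * (s x / s x)" for x
    by (simp add: b_def s_def flip: sum_distrib_left sum_divide_distrib sum_distrib_right)
  then have mix_eq: "density \<mu> s = density L (\<lambda>x. (\<Sum>j\<in>J. b j x) / card J)"
    using ratio[OF s] by simp
  have "prob_density L p"
    using P(1) p by (simp add: P_eq prob_density_iff_prob_space)
  moreover have "prob_density L (b j)" if "j \<in> J" for j
  proof (rule prob_density_density_eq[OF q[OF that] q_eq[OF that]])
    show "b j \<in> borel_measurable L"
      unfolding b_def using m(1) q[OF that] s
      by (intro borel_measurable_times borel_measurable_divide)
        (auto simp: prob_density_def measurable_cong_sets[OF sets_L refl])
    show "\<And>x. x \<in> space L \<Longrightarrow> 0 \<le> b j x"
      using q[OF that] s m(2) by (auto simp: b_def prob_density_def space_L)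
  qed
  ultimately have "hellinger_sq (density L p) (density L (\<lambda>x. (\<Sum>j\<in>J. b j x) / card J))
      \<le> (\<Sum>j\<in>J. hellinger_sq (density L p) (density L (b j))) / card J"
    by (intro hellinger_sq_density_mean_le J)
  also have "(\<Sum>j\<in>J. hellinger_sq (density L p) (density L (b j)))
      = (\<Sum>j\<in>J. hellinger_sq P (density \<mu> (q j)))"
    by (intro sum.cong) (simp_all add: P_eq q_eq)
  finally show ?thesis
    unfolding s_def[symmetric] mix_eq P_eq .
qed

lemma sum_list_map_nths:
  "sum_list (map f (nths xs I)) = (\<Sum>i\<in>I \<inter> {..<length xs}. f (xs ! i))"
proof (induction xs rule: rev_induct)
  case (snoc x xs)
  have "(\<Sum>i\<in>I \<inter> {..<length xs}. f ((xs @ [x]) ! i)) = (\<Sum>i\<in>I \<inter> {..<length xs}. f (xs ! i))"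
    by (intro sum.cong) (auto simp: nth_append)
  moreover have "I \<inter> {..<length (xs @ [x])}
      = (if length xs \<in> I then insert (length xs) (I \<inter> {..<length xs}) else I \<inter> {..<length xs})"
    by (auto simp: lessThan_Suc)
  ultimately show ?case
    using snoc by (simp add: nths_append add.commute)
qed simp

lemma length_nths_diff:
  assumes "B \<subseteq> {0..<length xs}"
  shows "length (nths xs ({0..<length xs} - B)) = length xs - card B"
proof -
  have "{i. i < length xs \<and> i \<in> {0..<length xs} - B} = {0..<length xs} - B" by auto
  then show ?thesis
    using assms by (simp add: length_nths card_Diff_subset finite_subset)
qed

lemma UNION_eq_if_sum_card_eq:
  assumes "finite I" "finite J" "\<And>j. j \<in> J \<Longrightarrow> B j \<subseteq> I" "disjoint_family_on B J"
    and "(\<Sum>j\<in>J. card (B j)) = card I"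
  shows "(\<Union>j\<in>J. B j) = I"
proof (rule card_subset_eq)
  have "card (\<Union>j\<in>J. B j) = (\<Sum>j\<in>J. card (B j))"
    using assms by (intro card_UN_disjoint) (auto simp: disjoint_family_on_def intro: finite_subset)
  then show "card (\<Union>j\<in>J. B j) = card I" using assms(5) by simp
qed (use assms in auto)

lemma sum_complements_of_partition:
  fixes f :: "'a \<Rightarrow> 'b::comm_ring_1"
  assumes "finite I" "finite J" "\<And>j. j \<in> J \<Longrightarrow> B j \<subseteq> I" "disjoint_family_on B J"
    and "(\<Union>j\<in>J. B j) = I"
  shows "(\<Sum>j\<in>J. sum f (I - B j)) = (of_nat (card J) - 1) * sum f I"
proof -
  have "(\<Sum>j\<in>J. sum f (B j)) = sum f I"
    unfolding assms(5)[symmetric] using assms(1-4)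
    by (intro sum.UNION_disjoint_family[symmetric]) (auto intro: finite_subset)
  moreover have "(\<Sum>j\<in>J. sum f (I - B j)) = (\<Sum>j\<in>J. sum f I - sum f (B j))"
    using assms by (intro sum.cong) (auto simp: sum_diff)
  ultimately show ?thesis
    by (simp add: sum_subtractf algebra_simps)
qed

lemma mean_eq_mean_of_leave_out_means:
  fixes g :: "'a \<Rightarrow> real" and xs :: "'a list" and B :: "'j \<Rightarrow> nat set"
  defines "I \<equiv> {0..<length xs}"
  assumes J: "finite J" "2 \<le> card J" and len: "length xs = p * card J"
    and B: "\<And>j. j \<in> J \<Longrightarrow> B j \<subseteq> I" "\<And>j. j \<in> J \<Longrightarrow> card (B j) = p" "disjoint_family_on B J"
  shows "sum_list (map g xs) / length xs
    = (\<Sum>j\<in>J. sum_list (map g (nths xs (I - B j))) / length (nths xs (I - B j))) / card J"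
proof -
  define S where "S = (\<Sum>i\<in>I. g (xs ! i))"
  have cover: "(\<Union>j\<in>J. B j) = I"
    using J len B by (intro UNION_eq_if_sum_card_eq) (auto simp: I_def)
  have "sum_list (map g (nths xs (I - B j))) / length (nths xs (I - B j))
      = (\<Sum>i\<in>I - B j. g (xs ! i)) / (p * (card J - 1))" if "j \<in> J" for j
  proof -
    have "(I - B j) \<inter> {..<length xs} = I - B j" by (auto simp: I_def)
    then show ?thesis
      using B that len length_nths_diff[of "B j" xs]
      by (simp add: sum_list_map_nths I_def diff_mult_distrib2)
  qed
  then have "(\<Sum>j\<in>J. sum_list (map g (nths xs (I - B j))) / length (nths xs (I - B j)))
      = (card J - 1) * S / (p * (card J - 1))"
    using sum_complements_of_partition[OF _ J(1) B(1,3) cover, of "\<lambda>i. g (xs ! i)"] J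
    by (simp add: I_def S_def sum_divide_distrib[symmetric] of_nat_diff)
  moreover have "sum_list (map g xs) = S"
    by (simp add: S_def I_def sum_list_sum_nth)
  ultimately show ?thesis
    using J len by (simp add: of_nat_diff)
qed

theorem proposition1:
  fixes \<mu> :: "'a measure" and K :: "'a \<Rightarrow> 'a \<Rightarrow> real"
    and A :: "'a list \<Rightarrow> 'a \<Rightarrow> real"
    and V p n :: nat and Xs :: "'a list" and B :: "nat \<Rightarrow> nat set"
    and P :: "'a measure"
  assumes A_def: "\<And>ys x. length ys \<ge> 1 \<Longrightarrow> set ys \<subseteq> space \<mu> \<Longrightarrow> x \<in> space \<mu> \<Longrightarrow>
                     A ys x = (1 / real (length ys)) * (\<Sum>i<length ys. K x (ys ! i))"
    and A_dens: "\<And>ys. length ys \<ge> 1 \<Longrightarrow> set ys \<subseteq> space \<mu> \<Longrightarrow> prob_density \<mu> (A ys)"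
    and V: "V \<ge> 2" and p: "p \<ge> 1" and n: "n = p * V"
    and Xs: "length Xs = n" "set Xs \<subseteq> space \<mu>"
    and B_sub: "\<And>j. j < V \<Longrightarrow> B j \<subseteq> {0..<n}"
    and B_card: "\<And>j. j < V \<Longrightarrow> card (B j) = p"
    and B_disj: "\<And>j k. j < V \<Longrightarrow> k < V \<Longrightarrow> j \<noteq> k \<Longrightarrow> B j \<inter> B k = {}"
    and P: "prob_space P" "sets P = sets \<mu>"
  shows "hellinger_sq P (density \<mu> (A Xs))
           \<le> (1 / real V) * (\<Sum>j<V. hellinger_sq P (density \<mu> (A (nths Xs ({0..<n} - B j)))))"
proof -
  define Ys where "Ys j = nths Xs ({0..<n} - B j)" for j
  have A_mean: "A ys x = sum_list (map (K x) ys) / length ys"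
    if "length ys \<ge> 1" "set ys \<subseteq> space \<mu>" "x \<in> space \<mu>" for ys x
    using A_def[OF that] by (simp add: sum_list_sum_nth atLeast0LessThan)
  have "1 \<le> p * (V - 1)" using p V by simp
  then have "1 \<le> n - p" by (simp add: n diff_mult_distrib2)
  then have Ys: "length (Ys j) \<ge> 1" "set (Ys j) \<subseteq> space \<mu>" if "j < V" for j
    using length_nths_diff[of "B j" Xs] B_sub[OF that] B_card[OF that] Xs
      order_trans[OF set_nths_subset Xs(2)]
    by (auto simp: Ys_def)
  have "A Xs x = (\<Sum>j<V. A (Ys j) x) / card {..<V}" if "x \<in> space \<mu>" for x
    using mean_eq_mean_of_leave_out_means[of "{..<V}" Xs p B "K x"] V p n Xs B_sub B_card B_disj
      A_mean Ys that
    by (simp add: Ys_def disjoint_family_on_def)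
  moreover have A_meas: "A ys \<in> borel_measurable \<mu>" if "length ys \<ge> 1" "set ys \<subseteq> space \<mu>" for ys
    using A_dens[OF that] by (simp add: prob_density_def)
  ultimately have "density \<mu> (A Xs) = density \<mu> (\<lambda>x. (\<Sum>j<V. A (Ys j) x) / card {..<V})"
    using Xs n p V Ys
    by (intro density_cong AE_I2)
      (auto intro!: measurable_compose[OF _ measurable_ennreal]
        borel_measurable_divide borel_measurable_sum A_meas)
  also have "hellinger_sq P \<dots> \<le> (\<Sum>j<V. hellinger_sq P (density \<mu> (A (Ys j)))) / card {..<V}"
    using P V A_dens Ys by (intro hellinger_sq_mixture_le) (auto simp: lessThan_empty_iff)
  finally show ?thesis
    by (simp add: Ys_def)
qed

end
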